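(* Let $k$ be an algebraically closed field and let $\mathcal{C}\subset\mathbb{P}^3$ be a quadric cone with vertex $v$. Fix an integer $d\ge 2$. Let $Y\in|\mathcal{O}_{\mathcal{C}}(d)|$ be an integral curve with only unibranch singularities and let $\phi:X\to Y$ be its normalization. Fix $q\in\mathcal{C}\setminus Y$ with $q\ne v$ and let $R_q$ be the line of $\mathcal{C}$ containing $q$. Then the linear projection from $q$ restricted to $Y$ is an injective morphism $Y\to\mathbb{P}^2$ (equivalently, its composition with $\phi$ is an injective morphism $X\to\mathbb{P}^2$) if and only if $R_q\cap Y$ consists of exactly one point.
   Context: $\mathcal{O}_{\mathcal{C}}(d)$ is the restriction of $\mathcal{O}_{\mathbb{P}^3}(d)$ to $\mathcal{C}$. *)

theory Defs
  imports "HOL-Computational_Algebra.Polynomial" "HOL-Library.Poly_Mapping"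
begin

(* Homogeneous coordinates on P^3: vectors x :: nat => 'a supported on {0,1,2,3}. *)
definition vec4 :: "(nat \<Rightarrow> 'a::zero) \<Rightarrow> bool" where
  "vec4 x \<longleftrightarrow> (\<forall>i\<ge>4. x i = 0)"

definition ppoint :: "(nat \<Rightarrow> 'a::zero) \<Rightarrow> bool" where
  "ppoint x \<longleftrightarrow> vec4 x \<and> x \<noteq> (\<lambda>_. 0)"

definition same_point :: "(nat \<Rightarrow> 'a::field) \<Rightarrow> (nat \<Rightarrow> 'a) \<Rightarrow> bool" where
  "same_point x y \<longleftrightarrow> (\<exists>c. c \<noteq> 0 \<and> y = (\<lambda>i. c * x i))"

type_synonym 'a mpoly = "(nat \<Rightarrow>\<^sub>0 nat) \<Rightarrow>\<^sub>0 'a"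

definition mpoly_eval :: "'a::comm_ring_1 mpoly \<Rightarrow> (nat \<Rightarrow> 'a) \<Rightarrow> 'a" where
  "mpoly_eval p x = (\<Sum>m\<in>Poly_Mapping.keys p. Poly_Mapping.lookup p m * (\<Prod>i\<in>Poly_Mapping.keys m. x i ^ Poly_Mapping.lookup m i))"

definition in4vars :: "'a::zero mpoly \<Rightarrow> bool" where
  "in4vars p \<longleftrightarrow> (\<forall>m\<in>Poly_Mapping.keys p. Poly_Mapping.keys m \<subseteq> {0..<4})"

definition hom_form :: "nat \<Rightarrow> 'a::zero mpoly \<Rightarrow> bool" where
  "hom_form d p \<longleftrightarrow> in4vars p \<and> (\<forall>m\<in>Poly_Mapping.keys p. (\<Sum>i\<in>Poly_Mapping.keys m. Poly_Mapping.lookup m i) = d)"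

definition ideal_gen :: "'a::comm_ring_1 mpoly list \<Rightarrow> 'a mpoly set" where
  "ideal_gen gs = {p. in4vars p \<and> (\<exists>cs. length cs = length gs \<and> (\<forall>c\<in>set cs. in4vars c)
                     \<and> p = (\<Sum>j<length gs. cs ! j * gs ! j))}"

definition prime_ideal4 :: "'a::comm_ring_1 mpoly set \<Rightarrow> bool" where
  "prime_ideal4 I \<longleftrightarrow> 1 \<notin> I \<and>
     (\<forall>f g. in4vars f \<longrightarrow> in4vars g \<longrightarrow> f * g \<in> I \<longrightarrow> f \<in> I \<or> g \<in> I)"

(* Quadric cone: a quadric surface V(Q) projectively equivalent to x0*x1 = x2^2,
   i.e. Q(L x) = x0*x1 - x2^2 for an invertible linear change of coordinates L;
   its vertex is [L e_3]. *)
definition lin_map4 :: "(nat \<Rightarrow> nat \<Rightarrow> 'a::comm_ring_1) \<Rightarrow> (nat \<Rightarrow> 'a) \<Rightarrow> (nat \<Rightarrow> 'a)" where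
  "lin_map4 A x = (\<lambda>i. if i < 4 then (\<Sum>j<4. A i j * x j) else 0)"

definition invertible4 :: "(nat \<Rightarrow> nat \<Rightarrow> 'a::comm_ring_1) \<Rightarrow> bool" where
  "invertible4 A \<longleftrightarrow> (\<exists>B. \<forall>x. vec4 x \<longrightarrow> lin_map4 B (lin_map4 A x) = x \<and> lin_map4 A (lin_map4 B x) = x)"

definition e3 :: "nat \<Rightarrow> 'a::{zero,one}" where
  "e3 = (\<lambda>i. if i = 3 then 1 else 0)"

definition quadric_cone_with_vertex :: "'a::field mpoly \<Rightarrow> (nat \<Rightarrow> 'a) \<Rightarrow> bool" where
  "quadric_cone_with_vertex Q v \<longleftrightarrow> hom_form 2 Q \<and>
     (\<exists>L. invertible4 L \<and> (\<forall>x. vec4 x \<longrightarrow> mpoly_eval Q (lin_map4 L x) = x 0 * x 1 - x 2 ^ 2)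
          \<and> same_point (lin_map4 L e3) v)"

definition proj_zeros :: "'a::field mpoly list \<Rightarrow> (nat \<Rightarrow> 'a) set" where
  "proj_zeros ps = {x. ppoint x \<and> (\<forall>p\<in>set ps. mpoly_eval p x = 0)}"

(* linear projection from q: y \<mapsto> image of y in k^4/<q>, as a point of P^2 *)
definition same_proj_image :: "(nat \<Rightarrow> 'a::field) \<Rightarrow> (nat \<Rightarrow> 'a) \<Rightarrow> (nat \<Rightarrow> 'a) \<Rightarrow> bool" where
  "same_proj_image q y1 y2 \<longleftrightarrow> (\<exists>c t. c \<noteq> 0 \<and> y2 = (\<lambda>i. c * y1 i + t * q i))"

definition projection_injective_on :: "(nat \<Rightarrow> 'a::field) \<Rightarrow> (nat \<Rightarrow> 'a) set \<Rightarrow> bool" where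
  "projection_injective_on q S \<longleftrightarrow>
     (\<forall>y1\<in>S. \<forall>y2\<in>S. same_proj_image q y1 y2 \<longrightarrow> same_point y1 y2)"

definition proj_line :: "(nat \<Rightarrow> 'a::field) \<Rightarrow> (nat \<Rightarrow> 'a) \<Rightarrow> (nat \<Rightarrow> 'a) set" where
  "proj_line a b = {x. ppoint x \<and> (\<exists>s t. x = (\<lambda>i. s * a i + t * b i))}"

definition exactly_one_point :: "(nat \<Rightarrow> 'a::field) set \<Rightarrow> bool" where
  "exactly_one_point S \<longleftrightarrow> (\<exists>y\<in>S. \<forall>z\<in>S. same_point y z)"

end

theory Submission
  imports Defs
begin

text \<open>
  Choose coordinates in which the cone is \<open>x\<^sub>0 x\<^sub>1 = x\<^sub>2\<^sup>2\<close> with vertex \<open>e\<^sub>3\<close>. If the line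
  through two points of the cone meets it in a third point, the two points are conjugate for the
  polar form, and conjugate points of the conic \<open>x\<^sub>0 x\<^sub>1 = x\<^sub>2\<^sup>2\<close> are proportional; so the only
  line of the cone through \<open>q \<noteq> v\<close> is the ruling \<open>R\<^sub>q\<close>. Hence two points of \<open>Y\<close> with the same
  image under the projection from \<open>q\<close> both lie on \<open>R\<^sub>q\<close>, while, as \<open>q \<notin> Y\<close>, all points of
  \<open>R\<^sub>q \<inter> Y\<close> have the same image. Finally \<open>R\<^sub>q \<inter> Y\<close> is never empty, because \<open>F\<close> restricted to
  \<open>R\<^sub>q\<close> is a binary form of positive degree over an algebraically closed field.
\<close>

lemma same_point_sym:
  fixes x y :: "nat \<Rightarrow> 'a::field"
  assumes "same_point x y"
  shows "same_point y x"
proof -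
  obtain c where "c \<noteq> 0" "y = (\<lambda>i. c * x i)" using assms by (auto simp: same_point_def)
  then show ?thesis
    unfolding same_point_def by (intro exI[of _ "1 / c"]) (simp add: fun_eq_iff)
qed

lemma same_point_trans:
  fixes x y z :: "nat \<Rightarrow> 'a::field"
  assumes "same_point x y" "same_point y z"
  shows "same_point x z"
proof -
  obtain a where "a \<noteq> 0" "y = (\<lambda>i. a * x i)" using assms(1) by (auto simp: same_point_def)
  moreover obtain b where "b \<noteq> 0" "z = (\<lambda>i. b * y i)" using assms(2) by (auto simp: same_point_def)
  ultimately show ?thesis
    unfolding same_point_def by (intro exI[of _ "b * a"]) (simp add: fun_eq_iff)
qed

lemma lin_indep_if_not_same_point:
  fixes x y :: "nat \<Rightarrow> 'a::field"
  assumes "x \<noteq> (\<lambda>_. 0)" "y \<noteq> (\<lambda>_. 0)" "\<not> same_point x y"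
    and "(\<lambda>i. s * x i + t * y i) = (\<lambda>_. 0)"
  shows "s = 0 \<and> t = 0"
proof (cases "t = 0")
  case True
  with assms(1,4) show ?thesis by (auto simp: fun_eq_iff)
next
  case False
  have y: "y = (\<lambda>i. (- s / t) * x i)"
  proof
    fix i
    have "s * x i + t * y i = 0" using fun_cong[OF assms(4), of i] by simp
    with False show "y i = (- s / t) * x i" by (simp add: field_simps add_eq_0_iff)
  qed
  with assms(2) have "s \<noteq> 0" by auto
  with y False have "same_point x y"
    unfolding same_point_def by (intro exI[of _ "- s / t"]) simp
  with assms(3) show ?thesis by blast
qed

lemma vec4_eqI:
  assumes "vec4 x" "vec4 y" "x 0 = y 0" "x 1 = y 1" "x 2 = y 2" "x 3 = y 3"
  shows "x = y"
proof
  fix i :: nat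
  consider "i = 0" | "i = 1" | "i = 2" | "i = 3" | "i \<ge> 4" by linarith
  then show "x i = y i" using assms by cases (auto simp: vec4_def)
qed

lemma vec4_lin_comb:
  fixes x y :: "nat \<Rightarrow> 'a::comm_ring_1"
  shows "vec4 x \<Longrightarrow> vec4 y \<Longrightarrow> vec4 (\<lambda>i. s * x i + t * y i)"
  by (simp add: vec4_def)

lemma vec4_smult:
  fixes x :: "nat \<Rightarrow> 'a::comm_ring_1"
  shows "vec4 x \<Longrightarrow> vec4 (\<lambda>i. c * x i)"
  by (simp add: vec4_def)

lemma vec4_lin_map4: "vec4 (lin_map4 A x)"
  by (simp add: vec4_def lin_map4_def)

lemma vec4_e3: "vec4 e3"
  by (simp add: vec4_def e3_def)

lemma lin_map4_lin_comb:
  "lin_map4 A (\<lambda>i. s * x i + t * y i) = (\<lambda>i. s * lin_map4 A x i + t * lin_map4 A y i)"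
  by (simp add: fun_eq_iff lin_map4_def sum.distrib sum_distrib_left algebra_simps)

lemma lin_map4_smult: "lin_map4 A (\<lambda>i. c * x i) = (\<lambda>i. c * lin_map4 A x i)"
  by (simp add: fun_eq_iff lin_map4_def sum_distrib_left algebra_simps)

lemma lin_map4_zero: "lin_map4 A (\<lambda>_. 0) = (\<lambda>_. 0)"
  by (simp add: fun_eq_iff lin_map4_def)

definition cone_form :: "(nat \<Rightarrow> 'a::comm_ring_1) \<Rightarrow> 'a" where
  "cone_form x = x 0 * x 1 - x 2 ^ 2"

definition cone_polar :: "(nat \<Rightarrow> 'a::comm_ring_1) \<Rightarrow> (nat \<Rightarrow> 'a) \<Rightarrow> 'a" where
  "cone_polar a b = a 0 * b 1 + a 1 * b 0 - 2 * a 2 * b 2"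

lemma cone_form_lin_comb:
  "cone_form (\<lambda>i. s * a i + t * b i) =
     s\<^sup>2 * cone_form a + t\<^sup>2 * cone_form b + s * t * cone_polar a b"
  by (simp add: cone_form_def cone_polar_def algebra_simps power2_eq_square)

lemma cone_form_conjugate_proportional:
  fixes a b :: "nat \<Rightarrow> 'a::field"
  assumes "cone_form a = 0" "cone_form b = 0" "cone_polar a b = 0"
    and "a 0 \<noteq> 0 \<or> a 1 \<noteq> 0"
  shows "\<exists>k. b 0 = k * a 0 \<and> b 1 = k * a 1 \<and> b 2 = k * a 2"
proof -
  note hyps = assms(1-3)[unfolded cone_form_def cone_polar_def]
  have "(a 0 * b 1 - a 1 * b 0)\<^sup>2 = 0" using hyps by algebra
  then have e01: "a 0 * b 1 = a 1 * b 0" by simp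
  have "(a 0 * b 2 - a 2 * b 0)\<^sup>2 = 0" using hyps by algebra
  then have e02: "a 0 * b 2 = a 2 * b 0" by simp
  have "(a 1 * b 2 - a 2 * b 1)\<^sup>2 = 0" using hyps by algebra
  then have e12: "a 1 * b 2 = a 2 * b 1" by simp
  show ?thesis
  proof (cases "a 0 = 0")
    case False
    with e01 e02 show ?thesis by (intro exI[of _ "b 0 / a 0"]) (auto simp: field_simps)
  next
    case True
    with assms(4) e01 e12 show ?thesis by (intro exI[of _ "b 1 / a 1"]) (auto simp: field_simps)
  qed
qed

lemma cone_form_secant_in_ruling:
  fixes a b :: "nat \<Rightarrow> 'a::field"
  assumes "vec4 a" "vec4 b" "cone_form a = 0" "cone_form b = 0"
    and "cone_form (\<lambda>i. c * a i + t * b i) = 0" "c \<noteq> 0" "t \<noteq> 0"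
    and "b 0 \<noteq> 0 \<or> b 1 \<noteq> 0 \<or> b 2 \<noteq> 0"
  shows "\<exists>s r. a = (\<lambda>i. s * e3 i + r * b i)"
proof -
  have conj: "cone_polar a b = 0"
    using assms(3-7) by (simp add: cone_form_lin_comb)
  show ?thesis
  proof (cases "a 0 = 0 \<and> a 1 = 0")
    case True
    then have "a 2 = 0" using assms(3) by (simp add: cone_form_def)
    with True have "a = (\<lambda>i. a 3 * e3 i + 0 * b i)"
      by (intro vec4_eqI assms(1) vec4_lin_comb vec4_e3 assms(2)) (simp_all add: e3_def)
    then show ?thesis by blast
  next
    case False
    then obtain k where k: "b 0 = k * a 0" "b 1 = k * a 1" "b 2 = k * a 2"
      using cone_form_conjugate_proportional[OF assms(3,4) conj] by blast
    with assms(8) have "k \<noteq> 0" by auto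
    with k have "a = (\<lambda>i. (a 3 - b 3 / k) * e3 i + (1 / k) * b i)"
      by (intro vec4_eqI assms(1) vec4_lin_comb vec4_e3 assms(2)) (simp_all add: e3_def)
    then show ?thesis by blast
  qed
qed

lemma quadric_cone_normal_coordinates:
  assumes "quadric_cone_with_vertex Q v"
  obtains L c where "c \<noteq> 0" "v = lin_map4 L (\<lambda>i. c * e3 i)"
    and "\<And>x. vec4 x \<Longrightarrow> mpoly_eval Q (lin_map4 L x) = cone_form x"
    and "\<And>y. vec4 y \<Longrightarrow> \<exists>x. vec4 x \<and> y = lin_map4 L x"
    and "\<And>x. vec4 x \<Longrightarrow> lin_map4 L x = (\<lambda>_. 0) \<Longrightarrow> x = (\<lambda>_. 0)"
proof -
  obtain L where inv: "invertible4 L"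
    and QL: "\<And>x. vec4 x \<Longrightarrow> mpoly_eval Q (lin_map4 L x) = x 0 * x 1 - x 2 ^ 2"
    and Lv: "same_point (lin_map4 L e3) v"
    using assms unfolding quadric_cone_with_vertex_def by blast
  obtain B where BL: "\<And>x. vec4 x \<Longrightarrow> lin_map4 B (lin_map4 L x) = x"
    and LB: "\<And>x. vec4 x \<Longrightarrow> lin_map4 L (lin_map4 B x) = x"
    using inv unfolding invertible4_def by blast
  obtain c where "c \<noteq> 0" "v = (\<lambda>i. c * lin_map4 L e3 i)"
    using Lv unfolding same_point_def by blast
  moreover have "\<exists>x. vec4 x \<and> y = lin_map4 L x" if "vec4 y" for y
    using LB[OF that] vec4_lin_map4 by metis
  moreover have "x = (\<lambda>_. 0)" if "vec4 x" "lin_map4 L x = (\<lambda>_. 0)" for x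
    using BL[OF that(1)] that(2) by (simp add: lin_map4_zero)
  ultimately show ?thesis
    using that QL by (simp add: lin_map4_smult cone_form_def)
qed

lemma quadric_cone_vertex_ppoint:
  assumes "quadric_cone_with_vertex Q v"
  shows "ppoint v"
proof -
  obtain L c where c: "c \<noteq> 0" and v: "v = lin_map4 L (\<lambda>i. c * e3 i)"
    and inj: "\<And>x. vec4 x \<Longrightarrow> lin_map4 L x = (\<lambda>_. 0) \<Longrightarrow> x = (\<lambda>_. 0)"
    using quadric_cone_normal_coordinates[OF assms] by metis
  have "vec4 (\<lambda>i. c * e3 i)" "(\<lambda>i. c * e3 i) \<noteq> (\<lambda>_. 0 :: 'a)"
    using c by (auto simp: vec4_def e3_def fun_eq_iff)
  then show ?thesis
    using inj unfolding ppoint_def v by (auto simp: vec4_lin_map4)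
qed

lemma quadric_cone_ruling:
  assumes "quadric_cone_with_vertex Q v" "q \<in> proj_zeros [Q]"
  shows "mpoly_eval Q (\<lambda>i. s * v i + t * q i) = 0"
proof -
  obtain L c where v: "v = lin_map4 L (\<lambda>i. c * e3 i)"
    and QL: "\<And>x. vec4 x \<Longrightarrow> mpoly_eval Q (lin_map4 L x) = cone_form x"
    and onto: "\<And>y. vec4 y \<Longrightarrow> \<exists>x. vec4 x \<and> y = lin_map4 L x"
    using quadric_cone_normal_coordinates[OF assms(1)] by metis
  obtain b where b: "vec4 b" "q = lin_map4 L b"
    using onto assms(2) by (auto simp: proj_zeros_def ppoint_def)
  have "cone_form b = 0" using assms(2) QL[OF b(1)] by (simp add: proj_zeros_def b(2))
  have "(\<lambda>i. s * v i + t * q i) = lin_map4 L (\<lambda>i. s * (c * e3 i) + t * b i)"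
    by (simp add: lin_map4_lin_comb v b(2))
  then have "mpoly_eval Q (\<lambda>i. s * v i + t * q i) = cone_form (\<lambda>i. s * (c * e3 i) + t * b i)"
    using QL[OF vec4_lin_comb[OF vec4_smult[OF vec4_e3] b(1)]] by simp
  then show ?thesis
    using \<open>cone_form b = 0\<close> by (simp add: cone_form_lin_comb cone_form_def cone_polar_def e3_def)
qed

lemma quadric_cone_secant_in_ruling:
  assumes cone: "quadric_cone_with_vertex Q v" and q: "q \<in> proj_zeros [Q]"
    and q_ne_v: "\<not> same_point v q"
    and y: "vec4 y" "mpoly_eval Q y = 0"
    and third: "mpoly_eval Q (\<lambda>i. c * y i + t * q i) = 0" "c \<noteq> 0" "t \<noteq> 0"
  shows "\<exists>s r. y = (\<lambda>i. s * v i + r * q i)"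
proof -
  obtain L c0 where c0: "c0 \<noteq> 0" and v: "v = lin_map4 L (\<lambda>i. c0 * e3 i)"
    and QL: "\<And>x. vec4 x \<Longrightarrow> mpoly_eval Q (lin_map4 L x) = cone_form x"
    and onto: "\<And>y. vec4 y \<Longrightarrow> \<exists>x. vec4 x \<and> y = lin_map4 L x"
    using quadric_cone_normal_coordinates[OF cone] by metis
  obtain a where a: "vec4 a" "y = lin_map4 L a" using onto y(1) by blast
  obtain b where b: "vec4 b" "q = lin_map4 L b"
    using onto q by (auto simp: proj_zeros_def ppoint_def)
  have ab: "cone_form a = 0" "cone_form b = 0"
    using y(2) q QL a b by (auto simp: proj_zeros_def)
  have secant: "cone_form (\<lambda>i. c * a i + t * b i) = 0"
    using third(1) QL[OF vec4_lin_comb[OF a(1) b(1)]] by (simp add: a(2) b(2) lin_map4_lin_comb)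
  have b_not_vertex: "b 0 \<noteq> 0 \<or> b 1 \<noteq> 0 \<or> b 2 \<noteq> 0"
  proof (rule ccontr)
    assume vertex: "\<not> ?thesis"
    define k where "k = b 3 / c0"
    have "b = (\<lambda>i. k * (c0 * e3 i))"
      using c0 vertex unfolding k_def
      by (intro vec4_eqI b(1) vec4_smult vec4_e3) (simp_all add: e3_def)
    then have qv: "q = (\<lambda>i. k * v i)" by (simp add: b(2) v lin_map4_smult)
    moreover have "q \<noteq> (\<lambda>_. 0)" using q by (simp add: proj_zeros_def ppoint_def)
    ultimately have "k \<noteq> 0" by auto
    with qv have "same_point v q" unfolding same_point_def by blast
    with q_ne_v show False ..
  qed
  obtain s r where "a = (\<lambda>i. s * e3 i + r * b i)"
    using cone_form_secant_in_ruling[OF a(1) b(1) ab secant third(2,3) b_not_vertex] by blast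
  then have "y = (\<lambda>i. (s / c0) * v i + r * q i)"
    using c0 by (simp add: a(2) b(2) v lin_map4_lin_comb lin_map4_smult)
  then show ?thesis by blast
qed

lemma hom_form_eval_smult:
  assumes "hom_form d p"
  shows "mpoly_eval p (\<lambda>i. c * x i) = c ^ d * mpoly_eval p x"
proof -
  have "\<forall>m\<in>Poly_Mapping.keys p. (\<Prod>i\<in>Poly_Mapping.keys m. (c * x i) ^ Poly_Mapping.lookup m i)
        = c ^ d * (\<Prod>i\<in>Poly_Mapping.keys m. x i ^ Poly_Mapping.lookup m i)"
    using assms by (auto simp: hom_form_def power_mult_distrib prod.distrib power_sum[symmetric])
  then show ?thesis
    by (simp add: mpoly_eval_def sum_distrib_left algebra_simps cong: sum.cong)
qed

lemma mpoly_eval_on_line_is_poly: "\<exists>P. \<forall>t. poly P t = mpoly_eval p (\<lambda>i. a i + t * b i)"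
proof
  show "\<forall>t. poly (\<Sum>m\<in>Poly_Mapping.keys p. [:Poly_Mapping.lookup p m:] *
        (\<Prod>i\<in>Poly_Mapping.keys m. [:a i, b i:] ^ Poly_Mapping.lookup m i)) t
        = mpoly_eval p (\<lambda>i. a i + t * b i)"
    by (simp add: mpoly_eval_def poly_sum poly_prod algebra_simps)
qed

lemma poly_rootless_constant:
  fixes P :: "'a::alg_closed_field poly"
  assumes "\<And>t. poly P t \<noteq> 0"
  shows "poly P t = poly P 0"
proof -
  have "degree P = 0" using assms alg_closed_imp_poly_has_root by blast
  then obtain c where "P = [:c:]" by (rule degree_eq_zeroE)
  then show ?thesis by simp
qed

lemma exists_not_root_of_unity:
  assumes "0 < d"
  shows "\<exists>u::'a::alg_closed_field. u \<noteq> 0 \<and> u ^ d \<noteq> 1"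
proof -
  let ?P = "monom (1::'a) (Suc d) + [:- 1, - 1:]"
  have "degree ?P = Suc d"
    using assms by (subst degree_add_eq_left) (auto simp: degree_monom_eq)
  then obtain u where u: "poly ?P u = 0"
    using alg_closed_imp_poly_has_root by (metis zero_less_Suc)
  then have "u * u ^ d = 1 + u" by (simp add: poly_monom add_eq_0_iff2)
  then show ?thesis by (intro exI[of _ u]) auto
qed

text \<open>
  A binary form of positive degree has a nontrivial zero: otherwise \<open>p(a + t b)\<close> and
  \<open>p(t a + b)\<close> would be constant polynomials in \<open>t\<close>, and homogeneity would force \<open>u\<^sup>d = 1\<close>
  for every \<open>u \<noteq> 0\<close>.
\<close>
lemma hom_form_has_zero_on_pencil:
  fixes p :: "'a::alg_closed_field mpoly"
  assumes p: "hom_form d p" and "0 < d"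
  shows "\<exists>s t. (s \<noteq> 0 \<or> t \<noteq> 0) \<and> mpoly_eval p (\<lambda>i. s * a i + t * b i) = 0"
proof (rule ccontr)
  assume "\<not> ?thesis"
  then have no_zero: "mpoly_eval p (\<lambda>i. s * a i + t * b i) \<noteq> 0" if "s \<noteq> 0 \<or> t \<noteq> 0" for s t
    using that by blast
  obtain P where P: "\<And>t. poly P t = mpoly_eval p (\<lambda>i. a i + t * b i)"
    using mpoly_eval_on_line_is_poly[of p a b] by blast
  obtain R where R: "\<And>t. poly R t = mpoly_eval p (\<lambda>i. b i + t * a i)"
    using mpoly_eval_on_line_is_poly[of p b a] by blast
  have P_const: "poly P t = poly P 0" for t
  proof (rule poly_rootless_constant)
    show "poly P t \<noteq> 0" for t using no_zero[of 1 t] by (simp add: P)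
  qed
  have R_const: "poly R t = poly R 0" for t
  proof (rule poly_rootless_constant)
    fix t
    have "(\<lambda>i. b i + t * a i) = (\<lambda>i. t * a i + 1 * b i)" by (simp add: fun_eq_iff add.commute)
    then show "poly R t \<noteq> 0" using no_zero[of t 1] by (simp add: R)
  qed
  have "poly P 1 = poly R 1" by (simp add: P R add.commute)
  then have PR: "poly P 0 = poly R 0" using P_const[of 1] R_const[of 1] by simp
  obtain u :: 'a where u: "u \<noteq> 0" "u ^ d \<noteq> 1" using exists_not_root_of_unity[OF assms(2)] by blast
  have "(\<lambda>i. a i + u * b i) = (\<lambda>i. u * (b i + (1 / u) * a i))"
    using u(1) by (simp add: fun_eq_iff field_simps)
  then have "poly P u = mpoly_eval p (\<lambda>i. u * (b i + (1 / u) * a i))"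
    by (simp only: P)
  also have "\<dots> = u ^ d * poly R (1 / u)"
    by (simp add: hom_form_eval_smult[OF p] R)
  finally have "poly R 0 = u ^ d * poly R 0"
    using P_const[of u] R_const[of "1 / u"] PR by simp
  moreover have "poly R 0 \<noteq> 0" using no_zero[of 0 1] by (simp add: R)
  ultimately show False using u(2) by (metis mult_cancel_right1)
qed

lemma ruling_meets_curve:
  fixes F :: "'a::alg_closed_field mpoly"
  assumes cone: "quadric_cone_with_vertex Q v" and q: "q \<in> proj_zeros [Q]"
    and q_ne_v: "\<not> same_point v q" and F: "hom_form d F" "0 < d"
  shows "\<exists>y. y \<in> proj_line v q \<inter> proj_zeros [Q, F]"
proof -
  obtain s t where st: "s \<noteq> 0 \<or> t \<noteq> 0" "mpoly_eval F (\<lambda>i. s * v i + t * q i) = 0"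
    using hom_form_has_zero_on_pencil[OF F] by blast
  have "ppoint v" "ppoint q" using quadric_cone_vertex_ppoint[OF cone] q by (auto simp: proj_zeros_def)
  then have "ppoint (\<lambda>i. s * v i + t * q i)"
    using st(1) lin_indep_if_not_same_point[OF _ _ q_ne_v] vec4_lin_comb
    by (auto simp: ppoint_def)
  then have "(\<lambda>i. s * v i + t * q i) \<in> proj_line v q \<inter> proj_zeros [Q, F]"
    using st(2) quadric_cone_ruling[OF cone q] by (auto simp: proj_line_def proj_zeros_def)
  then show ?thesis by blast
qed

text \<open>Points of the line \<open>vq\<close> where \<open>F\<close> vanishes differ from \<open>q\<close>, since \<open>F(q) \<noteq> 0\<close>.\<close>
lemma line_zeros_same_projection:
  assumes F: "hom_form d F" "mpoly_eval F q \<noteq> 0"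
    and y: "y \<in> proj_line v q" "mpoly_eval F y = 0"
    and z: "z \<in> proj_line v q" "mpoly_eval F z = 0"
  shows "same_proj_image q y z"
proof -
  have off_q: "\<exists>s t. s \<noteq> 0 \<and> x = (\<lambda>i. s * v i + t * q i)"
    if x_line: "x \<in> proj_line v q" and x_zero: "mpoly_eval F x = 0" for x
  proof -
    obtain s t where x: "ppoint x" "x = (\<lambda>i. s * v i + t * q i)"
      using x_line unfolding proj_line_def by blast
    have "s \<noteq> 0"
    proof
      assume "s = 0"
      then have "t ^ d * mpoly_eval F q = 0"
        using x_zero x(2) hom_form_eval_smult[OF F(1)] by simp
      then show False using F(2) x \<open>s = 0\<close> by (simp add: ppoint_def)
    qed
    with x show ?thesis by blast
  qed
  obtain s1 t1 s2 t2 where "s1 \<noteq> 0" "y = (\<lambda>i. s1 * v i + t1 * q i)"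
    and "s2 \<noteq> 0" "z = (\<lambda>i. s2 * v i + t2 * q i)"
    using off_q[OF y] off_q[OF z] by blast
  then show ?thesis
    unfolding same_proj_image_def
    by (intro exI[of _ "s2 / s1"] exI[of _ "t2 - s2 * t1 / s1"]) (simp add: fun_eq_iff field_simps)
qed

lemma same_projection_on_ruling:
  assumes cone: "quadric_cone_with_vertex Q v" and q: "q \<in> proj_zeros [Q]"
    and q_ne_v: "\<not> same_point v q"
    and y: "y1 \<in> proj_zeros [Q]" "y2 \<in> proj_zeros [Q]"
    and proj: "same_proj_image q y1 y2" and "\<not> same_point y1 y2"
  shows "y1 \<in> proj_line v q \<and> y2 \<in> proj_line v q"
proof -
  obtain c t where c: "c \<noteq> 0" and y2: "y2 = (\<lambda>i. c * y1 i + t * q i)"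
    using proj unfolding same_proj_image_def by blast
  have "t \<noteq> 0" using assms(7) c y2 by (auto simp: same_point_def)
  have "\<exists>s r. y1 = (\<lambda>i. s * v i + r * q i)"
    by (rule quadric_cone_secant_in_ruling[OF cone q q_ne_v _ _ _ c \<open>t \<noteq> 0\<close>])
      (use y y2 in \<open>auto simp: proj_zeros_def ppoint_def\<close>)
  then obtain s r where y1: "y1 = (\<lambda>i. s * v i + r * q i)" by blast
  have "y2 = (\<lambda>i. (c * s) * v i + (c * r + t) * q i)"
    by (simp add: y2 y1 fun_eq_iff algebra_simps)
  with y y1 show ?thesis by (auto simp: proj_line_def proj_zeros_def)
qed

theorem proposition4p5:
  fixes Q F :: "'a::alg_closed_field mpoly"
    and v q :: "nat \<Rightarrow> 'a"
    and d :: nat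
  assumes cone: "quadric_cone_with_vertex Q v"
    and d2: "d \<ge> 2"
    and F_form: "hom_form d F"
    and F_nontriv: "F \<notin> ideal_gen [Q]"
    and Y_integral: "prime_ideal4 (ideal_gen [Q, F])"
    and q_C: "q \<in> proj_zeros [Q]"
    and q_notY: "q \<notin> proj_zeros [Q, F]"
    and q_ne_v: "\<not> same_point v q"
  shows "projection_injective_on q (proj_zeros [Q, F])
           \<longleftrightarrow> exactly_one_point (proj_line v q \<inter> proj_zeros [Q, F])"
proof
  assume inj: "projection_injective_on q (proj_zeros [Q, F])"
  have Fq: "mpoly_eval F q \<noteq> 0" using q_C q_notY by (auto simp: proj_zeros_def)
  obtain y0 where y0: "y0 \<in> proj_line v q \<inter> proj_zeros [Q, F]"
    using ruling_meets_curve[OF cone q_C q_ne_v F_form] d2 by auto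
  show "exactly_one_point (proj_line v q \<inter> proj_zeros [Q, F])"
    unfolding exactly_one_point_def
  proof (intro bexI[OF _ y0] ballI)
    fix z assume z: "z \<in> proj_line v q \<inter> proj_zeros [Q, F]"
    have "same_proj_image q y0 z"
      by (rule line_zeros_same_projection[OF F_form Fq]) (use y0 z in \<open>auto simp: proj_zeros_def\<close>)
    then show "same_point y0 z" using inj y0 z unfolding projection_injective_on_def by blast
  qed
next
  assume "exactly_one_point (proj_line v q \<inter> proj_zeros [Q, F])"
  then obtain y where unique: "\<And>z. z \<in> proj_line v q \<inter> proj_zeros [Q, F] \<Longrightarrow> same_point y z"
    unfolding exactly_one_point_def by blast
  have on_cone: "proj_zeros [Q, F] \<subseteq> proj_zeros [Q]" by (auto simp: proj_zeros_def)
  show "projection_injective_on q (proj_zeros [Q, F])"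
    unfolding projection_injective_on_def
  proof (intro ballI impI)
    fix y1 y2 assume y12: "y1 \<in> proj_zeros [Q, F]" "y2 \<in> proj_zeros [Q, F]"
      and proj: "same_proj_image q y1 y2"
    show "same_point y1 y2"
    proof (rule ccontr)
      assume "\<not> same_point y1 y2"
      then have "y1 \<in> proj_line v q" "y2 \<in> proj_line v q"
        using same_projection_on_ruling[OF cone q_C q_ne_v _ _ proj] y12 on_cone by blast+
      then have "same_point y y1" "same_point y y2" using unique y12 by blast+
      then have "same_point y1 y2" by (blast intro: same_point_sym same_point_trans)
      with \<open>\<not> same_point y1 y2\<close> show False ..
    qed
  qed
qed

end
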